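(* Let $\mathcal P=\{a\otimes b:\ a\in\Delta^3,\ b\in\Delta^4\}$, where $(a\otimes b)_{(r,s)}=a_rb_s$. Let $W=a\otimes b\in\mathcal P$. If the AdaBoost step on $M_0$ from $W$ selects a column $A_j$, then the updated state is $W'=a'\otimes b$, where $a'$ is the one-step AdaBoost update of $a$ on $L_A$ using column $j$, i.e. $a'_r=a_r/(1+\mu(L_A)_{rj})$ with $\mu=(a^\top L_A)_j$. If it selects a column $B_j$, then $W'=a\otimes b'$, where $b'$ is the one-step update of $b$ on $L_B$ using column $j$. Hence $\mathcal P$ is invariant under the exhaustive AdaBoost dynamics on $M_0$.
   Context: Let $$L_A=\begin{pmatrix}1&1&-1&-1\\-1&1&1&1\\1&-1&-1&1\\1&-1&1&-1\end{pmatrix},\qquad L_B=\begin{pmatrix}1&1&-1&-1\\-1&1&1&1\\1&-1&-1&1\\1&-1&1&-1\\1&-1&1&1\end{pmatrix}.$$ The $20\times 8$ matrix $M_0$ has rows indexed by $(r,s)\in\{1,\dots,4\}\times\{1,\dots,5\}$ and columns $A_1,\dots,A_4,B_1,\dots,B_4$, with $M_0((r,s),A_j)=(L_A)_{rj}$, $M_0((r,s),B_j)=(L_B)_{sj}$. Exhaustive AdaBoost on a matrix $M\in\{-1,+1\}^{m\times N}$ maps $D\in\Delta^{m-1}$ to $D'$ with $D'(i)=D(i)/(1+r M_{ij^*})$, where $j^*=\min\operatorname{argmax}_j (D^\top M)_j$ and $r=(D^\top M)_{j^*}$. The one-step update of a distribution $u$ on the rows of a sign matrix $L$ using column $j$ is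 $u'_i=u_i/(1+\mu L_{ij})$ with $\mu=(u^\top L)_j$. $\Delta^{k}$ denotes the probability simplex in $\mathbb R^{k+1}$. *)

theory Defs
  imports Main Complex_Main
begin

text \<open>All indices are 1-based, as in the paper.  Row index r of L_A ranges over {1..4},
  row index s of L_B over {1..5}; column index j over {1..4}.\<close>

definition LA :: "nat \<Rightarrow> nat \<Rightarrow> real" where
  "LA r j = [[1,1,-1,-1],[-1,1,1,1],[1,-1,-1,1],[1,-1,1,-1]] ! (r - 1) ! (j - 1)"

definition LB :: "nat \<Rightarrow> nat \<Rightarrow> real" where
  "LB s j = [[1,1,-1,-1],[-1,1,1,1],[1,-1,-1,1],[1,-1,1,-1],[1,-1,1,1]] ! (s - 1) ! (j - 1)"

text \<open>Rows of M0: pairs (r,s).  Columns of M0 are numbered 1..8: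
  column j (1 \<le> j \<le> 4) is A_j, column 4+j (1 \<le> j \<le> 4) is B_j.\<close>

definition rows0 :: "(nat \<times> nat) set" where
  "rows0 = {1..4} \<times> {1..5}"

definition cols0 :: "nat set" where
  "cols0 = {1..8}"

definition M0 :: "nat \<times> nat \<Rightarrow> nat \<Rightarrow> real" where
  "M0 i c = (if c \<le> 4 then LA (fst i) c else LB (snd i) (c - 4))"

definition simplex :: "'a set \<Rightarrow> ('a \<Rightarrow> real) set" where
  "simplex I = {u. (\<forall>i\<in>I. 0 \<le> u i) \<and> (\<Sum>i\<in>I. u i) = 1}"

definition edge0 :: "(nat \<times> nat \<Rightarrow> real) \<Rightarrow> nat \<Rightarrow> real" where
  "edge0 D j = (\<Sum>i\<in>rows0. D i * M0 i j)"

definition jstar :: "(nat \<times> nat \<Rightarrow> real) \<Rightarrow> nat" where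
  "jstar D = (LEAST j. j \<in> cols0 \<and> (\<forall>k\<in>cols0. edge0 D k \<le> edge0 D j))"

definition ada_step :: "(nat \<times> nat \<Rightarrow> real) \<Rightarrow> (nat \<times> nat \<Rightarrow> real)" where
  "ada_step D = (let j = jstar D; r = edge0 D j in (\<lambda>i. D i / (1 + r * M0 i j)))"

definition one_step :: "(nat \<Rightarrow> nat \<Rightarrow> real) \<Rightarrow> nat set \<Rightarrow> (nat \<Rightarrow> real) \<Rightarrow> nat \<Rightarrow> (nat \<Rightarrow> real)" where
  "one_step L R u j = (let \<mu> = (\<Sum>i\<in>R. u i * L i j) in (\<lambda>i. u i / (1 + \<mu> * L i j)))"

definition tensor :: "(nat \<Rightarrow> real) \<Rightarrow> (nat \<Rightarrow> real) \<Rightarrow> (nat \<times> nat \<Rightarrow> real)" where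
  "tensor a b = (\<lambda>(r, s). a r * b s)"

definition inP :: "(nat \<times> nat \<Rightarrow> real) \<Rightarrow> bool" where
  "inP W \<longleftrightarrow> (\<exists>a\<in>simplex {1..4}. \<exists>b\<in>simplex {1..5}. \<forall>i\<in>rows0. W i = tensor a b i)"

end

theory Submission
  imports Defs
begin

text \<open>On a product distribution a \<otimes> b the weights of b sum to 1, so the edge of a column A_j
  of M0 is the edge \<mu> of a on column j of L_A, and the AdaBoost factor 1/(1 + \<mu> M0((r,s),A_j))
  depends on r alone: the step rescales a and leaves b untouched, and symmetrically for B_j.
  The rescaled factor is again a distribution: for a sign column,
  1/(1 + \<mu> L_r) = (1 - \<mu> L_r)/(1 - \<mu>^2), so the new weights sum to (1 - \<mu>^2)/(1 - \<mu>^2).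
  This needs \<mu> \<noteq> \<plusminus>1, which follows from the nonvanishing denominators because every column of
  L_A and L_B contains both signs.\<close>

definition edge :: "(nat \<Rightarrow> nat \<Rightarrow> real) \<Rightarrow> nat set \<Rightarrow> (nat \<Rightarrow> real) \<Rightarrow> nat \<Rightarrow> real" where
  "edge L R u j = (\<Sum>i\<in>R. u i * L i j)"

lemma one_step_eq: "one_step L R u j = (\<lambda>i. u i / (1 + edge L R u j * L i j))"
  by (simp add: one_step_def edge_def)

lemma abs_edge_le_1:
  assumes "u \<in> simplex R" and "(\<lambda>i. L i j) ` R \<subseteq> {-1, 1}"
  shows "\<bar>edge L R u j\<bar> \<le> 1"
proof -
  have "\<bar>edge L R u j\<bar> \<le> (\<Sum>i\<in>R. \<bar>u i * L i j\<bar>)"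
    unfolding edge_def by (rule sum_abs)
  also have "\<dots> = (\<Sum>i\<in>R. u i)"
    using assms by (intro sum.cong) (auto simp: simplex_def abs_mult)
  finally show ?thesis
    using assms(1) by (simp add: simplex_def)
qed

lemma divide_one_add_sign:
  fixes \<mu> l u :: real
  assumes "l = -1 \<or> l = 1" and "1 + \<mu> \<noteq> 0" and "1 - \<mu> \<noteq> 0"
  shows "u / (1 + \<mu> * l) = (u - \<mu> * (u * l)) / (1 - \<mu> * \<mu>)"
proof -
  have nz: "1 - \<mu> * l \<noteq> 0" and prod: "(1 + \<mu> * l) * (1 - \<mu> * l) = 1 - \<mu> * \<mu>"
    using assms by (auto simp: algebra_simps)
  have "u / (1 + \<mu> * l) = u * (1 - \<mu> * l) / ((1 + \<mu> * l) * (1 - \<mu> * l))"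
    using mult_divide_mult_cancel_right[OF nz] by simp
  also have "\<dots> = (u - \<mu> * (u * l)) / (1 - \<mu> * \<mu>)"
    by (simp only: prod) (simp add: algebra_simps)
  finally show ?thesis .
qed

lemma one_step_in_simplex:
  assumes u: "u \<in> simplex R"
    and signs: "(\<lambda>i. L i j) ` R = {-1, 1}"
    and denom: "\<forall>i\<in>R. 1 + edge L R u j * L i j \<noteq> 0"
  shows "one_step L R u j \<in> simplex R"
proof -
  define \<mu> where "\<mu> = edge L R u j"
  have sign: "L i j = -1 \<or> L i j = 1" if "i \<in> R" for i
    using signs that by blast
  have "1 \<in> (\<lambda>i. L i j) ` R" and "-1 \<in> (\<lambda>i. L i j) ` R"
    using signs by simp_all
  then obtain p m where "p \<in> R" "L p j = 1" "m \<in> R" "L m j = -1"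
    by (auto elim!: imageE)
  then have "1 + \<mu> * L p j \<noteq> 0" and "1 + \<mu> * L m j \<noteq> 0"
    using denom unfolding \<mu>_def by blast+
  then have "1 + \<mu> \<noteq> 0" and "1 - \<mu> \<noteq> 0"
    using \<open>L p j = 1\<close> \<open>L m j = -1\<close> by simp_all
  moreover have "1 - \<mu> * \<mu> = (1 + \<mu>) * (1 - \<mu>)"
    by (simp add: algebra_simps)
  ultimately have nz: "1 - \<mu> * \<mu> \<noteq> 0"
    by simp
  have "(\<Sum>i\<in>R. u i / (1 + \<mu> * L i j)) = (\<Sum>i\<in>R. (u i - \<mu> * (u i * L i j)) / (1 - \<mu> * \<mu>))"
  proof (rule sum.cong)
    fix i assume "i \<in> R"
    with sign \<open>1 + \<mu> \<noteq> 0\<close> \<open>1 - \<mu> \<noteq> 0\<close>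
    show "u i / (1 + \<mu> * L i j) = (u i - \<mu> * (u i * L i j)) / (1 - \<mu> * \<mu>)"
      by (blast intro: divide_one_add_sign)
  qed simp
  also have "\<dots> = ((\<Sum>i\<in>R. u i) - \<mu> * \<mu>) / (1 - \<mu> * \<mu>)"
    by (simp add: \<mu>_def edge_def sum_divide_distrib[symmetric] sum_subtractf sum_distrib_left)
  also have "\<dots> = 1"
    using u nz by (simp add: simplex_def)
  finally have sum: "(\<Sum>i\<in>R. one_step L R u j i) = 1"
    by (simp add: one_step_eq \<mu>_def)
  have "\<bar>\<mu>\<bar> \<le> 1"
    unfolding \<mu>_def using abs_edge_le_1[OF u] signs by simp
  have "0 \<le> one_step L R u j i" if "i \<in> R" for i
  proof -
    have "0 \<le> 1 + \<mu> * L i j"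
      using sign[OF that] \<open>\<bar>\<mu>\<bar> \<le> 1\<close> by (auto simp: abs_le_iff)
    with u that show ?thesis
      by (simp add: one_step_eq \<mu>_def simplex_def)
  qed
  with sum show ?thesis
    by (simp add: simplex_def)
qed

lemma LA_column_signs:
  assumes "j \<in> {1..4}"
  shows "(\<lambda>r. LA r j) ` {1..4} = {-1, 1}"
proof -
  have "{1..4::nat} = {1, 2, 3, 4}" by auto
  moreover have "j = 1 \<or> j = 2 \<or> j = 3 \<or> j = 4"
    using assms by auto
  ultimately show ?thesis
    by (elim disjE) (simp_all add: LA_def insert_commute)
qed

lemma LB_column_signs:
  assumes "j \<in> {1..4}"
  shows "(\<lambda>s. LB s j) ` {1..5} = {-1, 1}"
proof -
  have "{1..5::nat} = {1, 2, 3, 4, 5}" by auto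
  moreover have "j = 1 \<or> j = 2 \<or> j = 3 \<or> j = 4"
    using assms by auto
  ultimately show ?thesis
    by (elim disjE) (simp_all add: LB_def insert_commute)
qed

lemma edge0_tensor_A:
  assumes "b \<in> simplex {1..5}" and "j \<le> 4"
  shows "edge0 (tensor a b) j = edge LA {1..4} a j"
proof -
  have "edge0 (tensor a b) j = (\<Sum>r\<in>{1..4}. \<Sum>s\<in>{1..5}. a r * LA r j * b s)"
    using assms(2) by (simp add: edge0_def rows0_def tensor_def M0_def sum.cartesian_product
        case_prod_beta mult_ac)
  also have "\<dots> = edge LA {1..4} a j * (\<Sum>s\<in>{1..5}. b s)"
    by (simp add: edge_def sum_product)
  finally show ?thesis
    using assms(1) by (simp add: simplex_def)
qed

lemma edge0_tensor_B:
  assumes "a \<in> simplex {1..4}" and "0 < j"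
  shows "edge0 (tensor a b) (4 + j) = edge LB {1..5} b j"
proof -
  have "edge0 (tensor a b) (4 + j) = (\<Sum>r\<in>{1..4}. \<Sum>s\<in>{1..5}. a r * (b s * LB s j))"
    using assms(2) by (simp add: edge0_def rows0_def tensor_def M0_def sum.cartesian_product
        case_prod_beta mult_ac)
  also have "\<dots> = (\<Sum>r\<in>{1..4}. a r) * edge LB {1..5} b j"
    by (simp add: edge_def sum_product)
  finally show ?thesis
    using assms(1) by (simp add: simplex_def)
qed

lemma ada_step_tensor_A:
  assumes "b \<in> simplex {1..5}" and "j \<le> 4" and "jstar (tensor a b) = j"
  shows "ada_step (tensor a b) = tensor (one_step LA {1..4} a j) b"
  using assms edge0_tensor_A[OF assms(1,2)]
  by (auto simp: ada_step_def tensor_def one_step_eq M0_def)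

lemma ada_step_tensor_B:
  assumes "a \<in> simplex {1..4}" and "0 < j" and "jstar (tensor a b) = 4 + j"
  shows "ada_step (tensor a b) = tensor a (one_step LB {1..5} b j)"
  using assms edge0_tensor_B[OF assms(1,2)]
  by (auto simp: ada_step_def tensor_def one_step_eq M0_def)

lemma jstar_in_cols0: "jstar D \<in> cols0"
proof -
  have "finite cols0" and "cols0 \<noteq> {}"
    by (auto simp: cols0_def)
  then obtain j where "j \<in> cols0" and "Max (edge0 D ` cols0) = edge0 D j"
    by (rule obtains_MAX)
  with \<open>finite cols0\<close> have "j \<in> cols0 \<and> (\<forall>k\<in>cols0. edge0 D k \<le> edge0 D j)"
    by (metis Max_ge finite_imageI image_eqI)
  then show ?thesis
    unfolding jstar_def by (rule LeastI2) simp
qed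

lemma jstar_cases:
  obtains (A) j where "j \<in> {1..4}" and "jstar D = j"
    | (B) j where "j \<in> {1..4}" and "jstar D = 4 + j"
proof (cases "jstar D \<le> 4")
  case True
  with jstar_in_cols0[of D] show ?thesis
    using A by (auto simp: cols0_def)
next
  case False
  with jstar_in_cols0[of D] show ?thesis
    using B[of "jstar D - 4"] by (auto simp: cols0_def)
qed

lemma inP_tensor: "a \<in> simplex {1..4} \<Longrightarrow> b \<in> simplex {1..5} \<Longrightarrow> inP (tensor a b)"
  by (auto simp: inP_def)

lemma inP_ada_step_tensor_A:
  assumes a: "a \<in> simplex {1..4}" and b: "b \<in> simplex {1..5}"
    and j: "j \<in> {1..4}" and jstar: "jstar (tensor a b) = j"
    and denom: "\<forall>i\<in>rows0. 1 + edge0 (tensor a b) j * M0 i j \<noteq> 0"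
  shows "inP (ada_step (tensor a b))"
proof -
  have "1 + edge LA {1..4} a j * LA r j \<noteq> 0" if "r \<in> {1..4}" for r
    using denom[rule_format, of "(r, 1)"] that j edge0_tensor_A[OF b, of j a]
    by (simp add: rows0_def M0_def)
  then have "one_step LA {1..4} a j \<in> simplex {1..4}"
    using one_step_in_simplex[of a "{1..4}" LA j, OF a LA_column_signs[OF j]] by blast
  with b show ?thesis
    using ada_step_tensor_A[OF b _ jstar] j by (simp add: inP_tensor)
qed

lemma inP_ada_step_tensor_B:
  assumes a: "a \<in> simplex {1..4}" and b: "b \<in> simplex {1..5}"
    and j: "j \<in> {1..4}" and jstar: "jstar (tensor a b) = 4 + j"
    and denom: "\<forall>i\<in>rows0. 1 + edge0 (tensor a b) (4 + j) * M0 i (4 + j) \<noteq> 0"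
  shows "inP (ada_step (tensor a b))"
proof -
  have "1 + edge LB {1..5} b j * LB s j \<noteq> 0" if "s \<in> {1..5}" for s
    using denom[rule_format, of "(1, s)"] that j edge0_tensor_B[OF a, of j b]
    by (simp add: rows0_def M0_def)
  then have "one_step LB {1..5} b j \<in> simplex {1..5}"
    using one_step_in_simplex[of b "{1..5}" LB j, OF b LB_column_signs[OF j]] by blast
  with a show ?thesis
    using ada_step_tensor_B[OF a _ jstar] j by (simp add: inP_tensor)
qed

theorem lemma2:
  fixes a b :: "nat \<Rightarrow> real" and W :: "nat \<times> nat \<Rightarrow> real"
  assumes a: "a \<in> simplex {1..4}" and b: "b \<in> simplex {1..5}"
    and W: "W = tensor a b"
  shows "(\<forall>j\<in>{1..4}. jstar W = j \<longrightarrow>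
            (\<forall>i\<in>rows0. ada_step W i = tensor (one_step LA {1..4} a j) b i))
       \<and> (\<forall>j\<in>{1..4}. jstar W = 4 + j \<longrightarrow>
            (\<forall>i\<in>rows0. ada_step W i = tensor a (one_step LB {1..5} b j) i))
       \<and> ((\<forall>i\<in>rows0. 1 + edge0 W (jstar W) * M0 i (jstar W) \<noteq> 0) \<longrightarrow> inP (ada_step W))"
proof (intro conjI impI)
  show "\<forall>j\<in>{1..4}. jstar W = j \<longrightarrow>
            (\<forall>i\<in>rows0. ada_step W i = tensor (one_step LA {1..4} a j) b i)"
    using ada_step_tensor_A[OF b] unfolding W by auto
  show "\<forall>j\<in>{1..4}. jstar W = 4 + j \<longrightarrow>
            (\<forall>i\<in>rows0. ada_step W i = tensor a (one_step LB {1..5} b j) i)"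
    using ada_step_tensor_B[OF a] unfolding W by (auto simp: Suc_le_eq)
  assume "\<forall>i\<in>rows0. 1 + edge0 W (jstar W) * M0 i (jstar W) \<noteq> 0"
  then show "inP (ada_step W)"
    using W inP_ada_step_tensor_A[OF a b] inP_ada_step_tensor_B[OF a b]
    by (cases W rule: jstar_cases) simp_all
qed

end
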